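(* In the setting below, for every $n\in\mathbb{N}_0$ there exists a constant $C_{2n}\in(0,1)$, independent of $N$, such that $d(t_{2n+1})\le C_{2n}\,d(t_{2n})$.
   Context: Setting: $N\ge2$; $\psi:\mathbb{R}^d\times\mathbb{R}^d\to\mathbb{R}$ positive, bounded, continuous, $K:=\|\psi\|_\infty$; $\{t_n\}_{n\in\mathbb{N}_0}$ increasing, nonnegative, $t_0=0$, $t_n\to\infty$; $\alpha(0)=1$, $\alpha=1$ on $(t_{2n},t_{2n+1})$, $\alpha=-1$ on $[t_{2n+1},t_{2n+2}]$; $\{x_i\}$ solves $x_i'(t)=\frac1{N-1}\sum_{j\ne i}\alpha(t)\psi(x_i(t),x_j(t))(x_j(t)-x_i(t))$, $t>0$, $x_i(0)=x_i^0\in\mathbb{R}^d$ (continuous, $C^1$ on each $(t_n,t_{n+1})$). $d(t):=\max_{i,j}|x_i(t)-x_j(t)|$. Standing assumptions: $t_{2n+2}-t_{2n+1}<\frac{\ln 2}{K}$ for all $n$; $\sum_{p\ge0}\ln\frac{e^{K(t_{2p+2}-t_{2p+1})}}{2-e^{K(t_{2p+2}-t_{2p+1})}}<\infty$; $\sum_{p\ge0}\ln\max\{1-e^{-K(t_{2p+1}-t_{2p})},1-\frac{\psi_0}{K}(1-e^{-K(t_{2p+1}-t_{2p})})\}=-\infty$, with $\psi_0=\min_{|y|,|z|\le M^0}\psi(y,z)$, $M^0=e^{K\sum_{p}(t_{2p+2}-t_{2p+1})}\max_i|x_i^0|$. *)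

theory Defs
  imports "HOL-Analysis.Analysis"
begin

definition alpha_sw :: "(nat \<Rightarrow> real) \<Rightarrow> real \<Rightarrow> real" where
  "alpha_sw t s = (if \<exists>n. t (2*n+1) \<le> s \<and> s \<le> t (2*n+2) then -1 else 1)"

definition psi_sup :: "('a \<Rightarrow> 'a \<Rightarrow> real) \<Rightarrow> real" where
  "psi_sup \<psi> = (SUP p\<in>UNIV. \<psi> (fst p) (snd p))"

definition is_solution ::
  "nat \<Rightarrow> ('a::real_normed_vector \<Rightarrow> 'a \<Rightarrow> real) \<Rightarrow> (nat \<Rightarrow> real) \<Rightarrow> (nat \<Rightarrow> real \<Rightarrow> 'a) \<Rightarrow> bool" where
  "is_solution N \<psi> t x \<longleftrightarrow>
     (\<forall>i<N. continuous_on {0..} (x i)) \<and>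
     (\<forall>i<N. \<forall>k. \<forall>s\<in>{t k<..<t (Suc k)}.
        (x i has_vector_derivative
           ((1 / (real N - 1)) *\<^sub>R
             (\<Sum>j\<in>{..<N}-{i}. (alpha_sw t s * \<psi> (x i s) (x j s)) *\<^sub>R (x j s - x i s)))) (at s))"

definition diam_ag :: "nat \<Rightarrow> (nat \<Rightarrow> real \<Rightarrow> 'a::real_normed_vector) \<Rightarrow> real \<Rightarrow> real" where
  "diam_ag N x s = Max {norm (x i s - x j s) | i j. i < N \<and> j < N}"

definition M0 :: "nat \<Rightarrow> real \<Rightarrow> (nat \<Rightarrow> real) \<Rightarrow> (nat \<Rightarrow> real \<Rightarrow> 'a::real_normed_vector) \<Rightarrow> real" where
  "M0 N K t x = exp (K * (\<Sum>p. t (2*p+2) - t (2*p+1))) * Max {norm (x i 0) | i. i < N}"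

definition psi_min :: "('a::real_normed_vector \<Rightarrow> 'a \<Rightarrow> real) \<Rightarrow> real \<Rightarrow> real" where
  "psi_min \<psi> M = (INF p\<in>cball 0 M \<times> cball 0 M. \<psi> (fst p) (snd p))"

end

theory Submission
  imports Defs
begin

(* In a positive phase [a, b] = [t(2n), t(2n+1)] the system is a consensus flow, so every
   half-space {y. <v, y> <= mu} containing all agents at time a keeps containing them.
   Projecting onto the direction v of x_i(b) - x_k(b), all projections stay in [m, M] with
   M - m <= d(a), and the gap u = (M - <v, x_i>) + (<v, x_k> - m) satisfies
   u' >= psi0 (M - m) - (psi0 + K) u once all weights psi(x_j, x_l) lie in [psi0, K].
   Comparison with the linear equation gives |x_i(b) - x_k(b)| <= C d(a) with
   C = 1 - psi0 / (psi0 + K) (1 - exp (-(psi0 + K) (b - a))).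
   A lower bound psi0 > 0 independent of N is the minimum of psi on a ball containing every
   trajectory up to time b: whatever the sign of alpha, |x_i(s)| <= R exp ((2K + 1) s) when all
   |x_i(0)| <= R. Hence C depends only on n and R. *)

lemma stays_below_barrier:
  fixes f :: "nat \<Rightarrow> real \<Rightarrow> real" and h :: "real \<Rightarrow> real"
  assumes cont: "\<And>i. i < N \<Longrightarrow> continuous_on {a..b} (f i)"
    and h_cont: "continuous_on {a..b} h"
    and start: "\<And>i. i < N \<Longrightarrow> f i a < h a"
    and touch: "\<And>r i. r \<in> {a<..<b} \<Longrightarrow> i < N \<Longrightarrow> \<forall>j<N. f j r \<le> h r \<Longrightarrow> f i r = h r \<Longrightarrow>
      \<exists>d e. (f i has_real_derivative d) (at r) \<and> (h has_real_derivative e) (at r) \<and> d < e"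
    and i: "i < N" and s: "s \<in> {a..b}"
  shows "f i s \<le> h s"
proof (rule ccontr)
  assume above: "\<not> f i s \<le> h s"
  \<comment> \<open>\<open>\<tau>\<close> below is the first time at which some \<open>f j\<close> reaches \<open>h\<close>.\<close>
  define S where "S = {r \<in> {a..s}. \<exists>j<N. h r \<le> f j r}"
  have "s \<in> S" using above s i unfolding S_def by auto
  have "closed S"
  proof -
    have "S = (\<Union>j<N. {r \<in> {a..s}. h r \<le> f j r})" unfolding S_def by auto
    moreover have "closed {r \<in> {a..s}. h r \<le> f j r}" if "j < N" for j
      using cont[OF that] h_cont s
      by (intro continuous_on_closed_Collect_le) (auto elim!: continuous_on_subset)
    ultimately show ?thesis by auto
  qed
  have "bdd_below S" unfolding S_def by (auto intro: bdd_belowI[of _ a])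
  define \<tau> where "\<tau> = Inf S"
  have "\<tau> \<in> S"
    unfolding \<tau>_def using closed_contains_Inf \<open>s \<in> S\<close> \<open>bdd_below S\<close> \<open>closed S\<close> by blast
  then obtain k where k: "k < N" "h \<tau> \<le> f k \<tau>" and "a \<le> \<tau>" "\<tau> \<le> s" unfolding S_def by auto
  have "a < \<tau>" using start[OF k(1)] k(2) \<open>a \<le> \<tau>\<close> by (metis order_le_less not_less)
  have below: "f j r < h r" if "j < N" "r \<in> {a..<\<tau>}" for j r
  proof (rule ccontr)
    assume "\<not> f j r < h r"
    then have "r \<in> S" using that \<open>\<tau> \<le> s\<close> unfolding S_def by auto
    then show False using cInf_lower[OF _ \<open>bdd_below S\<close>] that unfolding \<tau>_def by force
  qed
  have at_most: "f j \<tau> \<le> h \<tau>" if "j < N" for j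
  proof -
    have "continuous_on (closure {a..<\<tau>}) (\<lambda>r. f j r - h r)"
      using \<open>a < \<tau>\<close> \<open>\<tau> \<le> s\<close> s cont[OF that] h_cont
      by (auto intro!: continuous_intros elim!: continuous_on_subset)
    then have "f j \<tau> - h \<tau> \<le> 0"
      by (rule continuous_le_on_closure) (use \<open>a < \<tau>\<close> below[OF that] in \<open>auto simp: less_imp_le\<close>)
    then show ?thesis by simp
  qed
  have "\<tau> \<noteq> s" using at_most[OF i] above by auto
  then have "\<tau> \<in> {a<..<b}" using \<open>a < \<tau>\<close> \<open>\<tau> \<le> s\<close> s by auto
  then obtain d e where "(f k has_real_derivative d) (at \<tau>)" "(h has_real_derivative e) (at \<tau>)" "d < e"
    using touch[of \<tau> k] k at_most by force
  then have "((\<lambda>r. f k r - h r) has_real_derivative d - e) (at \<tau>)" "d - e < 0"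
    by (auto intro: derivative_intros)
  then obtain \<delta> where "0 < \<delta>"
    and \<delta>: "\<And>\<eta>. 0 < \<eta> \<Longrightarrow> \<eta> < \<delta> \<Longrightarrow> f k \<tau> - h \<tau> < f k (\<tau> - \<eta>) - h (\<tau> - \<eta>)"
    using DERIV_neg_dec_left by blast
  define \<eta> where "\<eta> = min (\<delta> / 2) ((\<tau> - a) / 2)"
  have "0 < \<eta>" using \<open>0 < \<delta>\<close> \<open>a < \<tau>\<close> unfolding \<eta>_def by auto
  have "\<eta> \<le> \<delta> / 2" "\<eta> \<le> (\<tau> - a) / 2"
    unfolding \<eta>_def by (rule min.cobounded1, rule min.cobounded2)
  then have "\<eta> < \<delta>" "\<tau> - \<eta> \<in> {a..<\<tau>}" using \<open>0 < \<eta>\<close> \<open>0 < \<delta>\<close> by auto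
  then show False using \<open>0 < \<eta>\<close> \<delta> below[OF k(1)] k(2) at_most[OF k(1)] by fastforce
qed

lemma sum_weighted_diff_le:
  fixes w Y :: "nat \<Rightarrow> real" and \<theta> K M :: real
  assumes "finite A"
    and w: "\<And>l. l \<in> A \<Longrightarrow> \<theta> \<le> w l \<and> w l \<le> K"
    and Y: "\<And>l. l \<in> A \<Longrightarrow> Y l \<le> M" and "Y i \<le> M"
  shows "(\<Sum>l\<in>A. w l * (Y l - Y i)) \<le> card A * K * (M - Y i) - \<theta> * (\<Sum>l\<in>A. M - Y l)"
proof -
  have "(\<Sum>l\<in>A. w l * (Y l - Y i)) \<le> (\<Sum>l\<in>A. K * (M - Y i) - \<theta> * (M - Y l))"
  proof (rule sum_mono)
    fix l assume "l \<in> A"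
    have "w l * (M - Y i) \<le> K * (M - Y i)" "\<theta> * (M - Y l) \<le> w l * (M - Y l)"
      using w[OF \<open>l \<in> A\<close>] Y[OF \<open>l \<in> A\<close>] \<open>Y i \<le> M\<close> by (auto intro: mult_right_mono)
    then show "w l * (Y l - Y i) \<le> K * (M - Y i) - \<theta> * (M - Y l)" by (simp add: algebra_simps)
  qed
  also have "\<dots> = card A * K * (M - Y i) - \<theta> * (\<Sum>l\<in>A. M - Y l)"
    by (simp add: sum_subtractf flip: sum_distrib_left)
  finally show ?thesis .
qed

text \<open>The right-hand side is the derivative of the gap \<open>(M - Y i) + (Y k - m)\<close> along the
  consensus dynamics.\<close>
lemma consensus_gap_rate_ge:
  fixes w d Y :: "nat \<Rightarrow> real"
  assumes N: "2 \<le> N" and i: "i < N" and k: "k < N" and "0 \<le> \<psi>0"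
    and w: "\<And>l. l < N \<Longrightarrow> \<psi>0 \<le> w l \<and> w l \<le> K"
    and d: "\<And>l. l < N \<Longrightarrow> \<psi>0 \<le> d l \<and> d l \<le> K"
    and Y: "\<And>l. l < N \<Longrightarrow> m \<le> Y l \<and> Y l \<le> M"
  shows "\<psi>0 * (M - m) - (\<psi>0 + K) * ((M - Y i) + (Y k - m))
    \<le> 1 / (real N - 1) * (\<Sum>l\<in>{..<N}-{k}. d l * (Y l - Y k))
      - 1 / (real N - 1) * (\<Sum>l\<in>{..<N}-{i}. w l * (Y l - Y i))"
proof -
  define u where "u = (M - Y i) + (Y k - m)"
  have card: "card ({..<N} - {j}) = N - 1" if "j < N" for j using that by simp
  have lower: "(\<Sum>l\<in>{..<N}-{i}. w l * (Y l - Y i))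
      \<le> (real N - 1) * K * (M - Y i) - \<psi>0 * ((\<Sum>l<N. M - Y l) - (M - Y i))"
    using sum_weighted_diff_le[where A = "{..<N}-{i}" and \<theta> = \<psi>0 and K = K and w = w
        and Y = Y and M = M and i = i] w Y i card[OF i] N
    by (simp add: sum_diff1 of_nat_diff)
  have upper: "- (\<Sum>l\<in>{..<N}-{k}. d l * (Y l - Y k))
      \<le> (real N - 1) * K * (Y k - m) - \<psi>0 * ((\<Sum>l<N. Y l - m) - (Y k - m))"
    using sum_weighted_diff_le[where A = "{..<N}-{k}" and \<theta> = \<psi>0 and K = K and w = d
        and Y = "\<lambda>l. - Y l" and M = "- m" and i = k] d Y k card[OF k] N
    by (simp add: sum_diff1 of_nat_diff sum_negf[symmetric] algebra_simps)
  have total: "\<psi>0 * (\<Sum>l<N. M - Y l) + \<psi>0 * (\<Sum>l<N. Y l - m) = \<psi>0 * (real N * (M - m))"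
    by (simp add: sum.distrib[symmetric] flip: distrib_left)
  have "0 \<le> \<psi>0 * ((M - m) + (real N - 2) * u)"
    using \<open>0 \<le> \<psi>0\<close> Y[OF i] Y[OF k] N unfolding u_def by (intro mult_nonneg_nonneg) auto
  then have "(real N - 1) * (\<psi>0 * (M - m) - (\<psi>0 + K) * u)
      \<le> (\<Sum>l\<in>{..<N}-{k}. d l * (Y l - Y k)) - (\<Sum>l\<in>{..<N}-{i}. w l * (Y l - Y i))"
    using lower upper total unfolding u_def by (simp add: algebra_simps)
  moreover have "0 < real N - 1" using N by simp
  ultimately have "\<psi>0 * (M - m) - (\<psi>0 + K) * u
      \<le> ((\<Sum>l\<in>{..<N}-{k}. d l * (Y l - Y k)) - (\<Sum>l\<in>{..<N}-{i}. w l * (Y l - Y i))) / (real N - 1)"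
    by (simp add: pos_le_divide_eq mult.commute)
  then show ?thesis unfolding u_def by (simp add: diff_divide_distrib)
qed

lemma gronwall_lower_bound:
  fixes u u' :: "real \<Rightarrow> real"
  assumes "a \<le> b" and "L \<noteq> 0" and cont: "continuous_on {a..b} u"
    and deriv: "\<And>r. r \<in> {a<..<b} \<Longrightarrow> (u has_real_derivative u' r) (at r)"
    and rate: "\<And>r. r \<in> {a<..<b} \<Longrightarrow> \<beta> - L * u r \<le> u' r"
  shows "\<beta> / L + (u a - \<beta> / L) * exp (- L * (b - a)) \<le> u b"
proof -
  define g where "g r = exp (L * (r - a)) * (u r - \<beta> / L)" for r
  have "g a \<le> g b"
  proof (rule DERIV_nonneg_imp_increasing_open[OF \<open>a \<le> b\<close>])
    fix r assume "a < r" "r < b"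
    then have "(g has_real_derivative exp (L * (r - a)) * (u' r + L * u r - \<beta>)) (at r)"
      unfolding g_def using \<open>L \<noteq> 0\<close>
      by (auto intro!: derivative_eq_intros deriv simp: field_simps)
    moreover have "0 \<le> exp (L * (r - a)) * (u' r + L * u r - \<beta>)"
      using rate[of r] \<open>a < r\<close> \<open>r < b\<close> by simp
    ultimately show "\<exists>y. (g has_real_derivative y) (at r) \<and> 0 \<le> y" by blast
  qed (unfold g_def, intro continuous_intros cont)
  then have "(u a - \<beta> / L) * exp (- L * (b - a))
      \<le> exp (L * (b - a)) * (u b - \<beta> / L) * exp (- L * (b - a))"
    unfolding g_def by (simp add: mult_right_mono)
  also have "\<dots> = u b - \<beta> / L" by (simp flip: exp_add)
  finally show ?thesis by simp
qed

definition contraction_factor :: "real \<Rightarrow> real \<Rightarrow> real \<Rightarrow> real" where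
  "contraction_factor \<psi>0 K T = 1 - \<psi>0 / (\<psi>0 + K) * (1 - exp (- (\<psi>0 + K) * T))"

lemma contraction_factor_bounds:
  fixes \<psi>0 K T :: real
  assumes "0 < \<psi>0" "0 \<le> K" "0 < T"
  shows "0 < contraction_factor \<psi>0 K T" and "contraction_factor \<psi>0 K T < 1"
proof -
  define q where "q = \<psi>0 / (\<psi>0 + K)"
  define e where "e = 1 - exp (- (\<psi>0 + K) * T)"
  have "0 < q" "q \<le> 1" using assms unfolding q_def by auto
  have "0 < (\<psi>0 + K) * T" using assms by simp
  then have "- (\<psi>0 + K) * T < 0" by (simp only: mult_minus_left neg_less_0_iff_less)
  then have "0 < e" "e < 1" unfolding e_def by simp_all
  have "q * e \<le> e" using mult_right_mono[OF \<open>q \<le> 1\<close>, of e] \<open>0 < e\<close> by simp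
  then have "q * e < 1" using \<open>e < 1\<close> by linarith
  moreover have "0 < q * e" using \<open>0 < q\<close> \<open>0 < e\<close> by simp
  ultimately show "0 < contraction_factor \<psi>0 K T" and "contraction_factor \<psi>0 K T < 1"
    unfolding contraction_factor_def q_def e_def by simp_all
qed

lemma norm_consensus_field_le:
  fixes y :: "nat \<Rightarrow> 'a::real_normed_vector" and w :: "nat \<Rightarrow> real"
  assumes N: "2 \<le> N" and "i < N"
    and w: "\<And>l. l < N \<Longrightarrow> \<bar>w l\<bar> \<le> K" and y: "\<And>l. l < N \<Longrightarrow> norm (y l) \<le> \<rho>"
  shows "norm ((1 / (real N - 1)) *\<^sub>R (\<Sum>l\<in>{..<N}-{i}. w l *\<^sub>R (y l - y i))) \<le> 2 * K * \<rho>"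
proof -
  have "norm (\<Sum>l\<in>{..<N}-{i}. w l *\<^sub>R (y l - y i))
      \<le> (\<Sum>l\<in>{..<N}-{i}. \<bar>w l\<bar> * norm (y l - y i))"
    by (rule norm_sum[THEN order_trans]) simp
  also have "\<dots> \<le> (\<Sum>l\<in>{..<N}-{i}. K * (2 * \<rho>))"
  proof (rule sum_mono)
    fix l assume "l \<in> {..<N} - {i}"
    then have "norm (y l - y i) \<le> 2 * \<rho>"
      using norm_triangle_ineq4[of "y l" "y i"] y[of l] y[OF \<open>i < N\<close>] by auto
    then show "\<bar>w l\<bar> * norm (y l - y i) \<le> K * (2 * \<rho>)"
      using w[of l] \<open>l \<in> {..<N} - {i}\<close> by (auto intro: mult_mono order_trans[OF abs_ge_zero])
  qed
  also have "\<dots> = (real N - 1) * (2 * K * \<rho>)" using \<open>i < N\<close> N by (simp add: of_nat_diff)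
  finally show ?thesis using N by (simp add: field_simps)
qed

lemma finite_diam_ag_set: "finite {norm (x i s - x j s) | i j. i < (N::nat) \<and> j < N}"
  by (rule finite_image_set2) auto

lemma norm_le_diam_ag: "i < N \<Longrightarrow> j < N \<Longrightarrow> norm (x i s - x j s) \<le> diam_ag N x s"
  unfolding diam_ag_def by (rule Max_ge[OF finite_diam_ag_set]) blast

lemma diam_ag_le:
  assumes "0 < N" and "\<And>i j. i < N \<Longrightarrow> j < N \<Longrightarrow> norm (x i s - x j s) \<le> B"
  shows "diam_ag N x s \<le> B"
  unfolding diam_ag_def using assms by (intro Max.boundedI[OF finite_diam_ag_set]) auto

text \<open>One phase of the dynamics, with the weights \<open>\<alpha>(s) \<psi>(x\<^sub>j(s), x\<^sub>l(s))\<close> abstracted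
  to \<open>c j l s\<close>.\<close>
locale consensus_flow =
  fixes N :: nat and a b :: real
    and x :: "nat \<Rightarrow> real \<Rightarrow> 'a::real_inner" and c :: "nat \<Rightarrow> nat \<Rightarrow> real \<Rightarrow> real"
  assumes two_le_N: "2 \<le> N"
    and cont: "\<And>j. j < N \<Longrightarrow> continuous_on {a..b} (x j)"
    and deriv: "\<And>j s. j < N \<Longrightarrow> s \<in> {a<..<b} \<Longrightarrow> (x j has_vector_derivative
      (1 / (real N - 1)) *\<^sub>R (\<Sum>l\<in>{..<N}-{j}. c j l s *\<^sub>R (x l s - x j s))) (at s)"
begin

lemma inner_has_real_derivative:
  assumes "j < N" "s \<in> {a<..<b}"
  shows "((\<lambda>s. inner v (x j s)) has_real_derivative
    1 / (real N - 1) * (\<Sum>l\<in>{..<N}-{j}. c j l s * (inner v (x l s) - inner v (x j s)))) (at s)"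
proof -
  have "((\<lambda>s. inner v (x j s)) has_real_derivative
      inner v ((1 / (real N - 1)) *\<^sub>R (\<Sum>l\<in>{..<N}-{j}. c j l s *\<^sub>R (x l s - x j s)))) (at s)"
    using deriv[OF assms]
    unfolding has_real_derivative_iff_has_vector_derivative has_vector_derivative_def
    by (auto intro!: derivative_eq_intros simp: inner_scaleR_right)
  then show ?thesis by (simp add: inner_sum_right inner_diff_right)
qed

lemma inner_le_invariant:
  assumes c_nonneg: "\<And>j l s. j < N \<Longrightarrow> l < N \<Longrightarrow> s \<in> {a<..<b} \<Longrightarrow> 0 \<le> c j l s"
    and init: "\<And>l. l < N \<Longrightarrow> inner v (x l a) \<le> \<mu>"
    and "j < N" "s \<in> {a..b}"
  shows "inner v (x j s) \<le> \<mu>"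
proof (rule field_le_epsilon)
  fix \<epsilon> :: real assume "0 < \<epsilon>"
  have "inner v (x j s) \<le> \<mu> + \<epsilon> * exp (s - s)"
  proof (rule stays_below_barrier[where f = "\<lambda>j r. inner v (x j r)"
        and h = "\<lambda>r. \<mu> + \<epsilon> * exp (r - s)", OF _ _ _ _ \<open>j < N\<close> \<open>s \<in> {a..b}\<close>])
    show "continuous_on {a..b} (\<lambda>r. inner v (x i r))" if "i < N" for i
      using cont[OF that] by (intro continuous_intros)
    show "inner v (x i a) < \<mu> + \<epsilon> * exp (a - s)" if "i < N" for i
      using init[OF that] mult_pos_pos[OF \<open>0 < \<epsilon>\<close> exp_gt_zero[of "a - s"]] by linarith
    fix r i assume r: "r \<in> {a<..<b}" and "i < N"
      and all_below: "\<forall>l<N. inner v (x l r) \<le> \<mu> + \<epsilon> * exp (r - s)"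
      and touching: "inner v (x i r) = \<mu> + \<epsilon> * exp (r - s)"
    have "(\<Sum>l\<in>{..<N}-{i}. c i l r * (inner v (x l r) - inner v (x i r))) \<le> 0"
      using c_nonneg[OF \<open>i < N\<close> _ r] all_below touching
      by (intro sum_nonpos mult_nonneg_nonpos) auto
    then have "1 / (real N - 1) * (\<Sum>l\<in>{..<N}-{i}. c i l r * (inner v (x l r) - inner v (x i r)))
        \<le> 0"
      using two_le_N by (intro mult_nonneg_nonpos) auto
    also have "0 < \<epsilon> * exp (r - s)" using \<open>0 < \<epsilon>\<close> by simp
    finally have "1 / (real N - 1) * (\<Sum>l\<in>{..<N}-{i}. c i l r * (inner v (x l r) - inner v (x i r)))
      < \<epsilon> * exp (r - s)" .
    moreover have "((\<lambda>r. \<mu> + \<epsilon> * exp (r - s)) has_real_derivative \<epsilon> * exp (r - s)) (at r)"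
      by (auto intro!: derivative_eq_intros)
    ultimately show "\<exists>d e. ((\<lambda>r. inner v (x i r)) has_real_derivative d) (at r)
        \<and> ((\<lambda>r. \<mu> + \<epsilon> * exp (r - s)) has_real_derivative e) (at r) \<and> d < e"
      using inner_has_real_derivative[OF \<open>i < N\<close> r] by blast
  qed (intro continuous_intros)
  then show "inner v (x j s) \<le> \<mu> + \<epsilon>" by simp
qed

lemma norm_le_exp_growth:
  assumes c_bound: "\<And>j l s. j < N \<Longrightarrow> l < N \<Longrightarrow> s \<in> {a<..<b} \<Longrightarrow> \<bar>c j l s\<bar> \<le> K"
    and "0 \<le> B" and init: "\<And>l. l < N \<Longrightarrow> norm (x l a) \<le> B"
    and "j < N" "s \<in> {a..b}"
  shows "norm (x j s) \<le> B * exp ((2 * K + 1) * (s - a))"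
proof (rule field_le_epsilon)
  fix \<epsilon> :: real assume "0 < \<epsilon>"
  \<comment> \<open>The rate \<open>2 K + 1\<close> instead of the sharp \<open>2 K\<close> makes the barrier strictly faster.\<close>
  define H where "H r = B * exp ((2 * K + 1) * (r - a)) + \<epsilon> * exp ((2 * K + 1) * (r - s))" for r
  have H_pos: "0 < H r" for r unfolding H_def using \<open>0 \<le> B\<close> \<open>0 < \<epsilon>\<close> by (simp add: add_nonneg_pos)
  have "inner (x j s) (x j s) \<le> (H s)\<^sup>2"
  proof (rule stays_below_barrier[where f = "\<lambda>j r. inner (x j r) (x j r)" and h = "\<lambda>r. (H r)\<^sup>2",
        OF _ _ _ _ \<open>j < N\<close> \<open>s \<in> {a..b}\<close>])
    show "continuous_on {a..b} (\<lambda>r. inner (x i r) (x i r))" if "i < N" for i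
      using cont[OF that] by (intro continuous_intros)
    show "continuous_on {a..b} (\<lambda>r. (H r)\<^sup>2)" unfolding H_def by (intro continuous_intros)
    show "inner (x i a) (x i a) < (H a)\<^sup>2" if "i < N" for i
    proof -
      have "norm (x i a) < H a"
        using init[OF that] mult_pos_pos[OF \<open>0 < \<epsilon>\<close> exp_gt_zero[of "(2 * K + 1) * (a - s)"]]
        unfolding H_def by simp
      then show ?thesis
        by (simp add: power2_norm_eq_inner[symmetric] power_strict_mono)
    qed
    fix r i assume r: "r \<in> {a<..<b}" and "i < N"
      and all_below: "\<forall>l<N. inner (x l r) (x l r) \<le> (H r)\<^sup>2"
    have norm_le_H: "norm (x l r) \<le> H r" if "l < N" for l
      using all_below that H_pos[of r]
      by (auto simp: power2_norm_eq_inner[symmetric] intro: power2_le_imp_le)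
    define F where "F = (1 / (real N - 1)) *\<^sub>R (\<Sum>l\<in>{..<N}-{i}. c i l r *\<^sub>R (x l r - x i r))"
    have "norm F \<le> 2 * K * H r"
      unfolding F_def using two_le_N \<open>i < N\<close> c_bound[OF \<open>i < N\<close> _ r] norm_le_H
      by (intro norm_consensus_field_le) auto
    then have "norm (x i r) * norm F \<le> H r * (2 * K * H r)"
      using norm_le_H[OF \<open>i < N\<close>] H_pos[of r] by (intro mult_mono) auto
    then have "2 * inner (x i r) F \<le> 2 * (H r * (2 * K * H r))"
      using norm_cauchy_schwarz[of "x i r" F] by linarith
    also have "\<dots> < 2 * H r * ((2 * K + 1) * H r)"
      using H_pos[of r] by (simp add: algebra_simps)
    finally have "2 * inner (x i r) F < 2 * H r * ((2 * K + 1) * H r)" .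
    moreover have "((\<lambda>r. inner (x i r) (x i r)) has_real_derivative 2 * inner (x i r) F) (at r)"
      using deriv[OF \<open>i < N\<close> r] unfolding F_def
      unfolding has_real_derivative_iff_has_vector_derivative has_vector_derivative_def
      by (auto intro!: derivative_eq_intros simp: inner_scaleR_right inner_commute)
    moreover have "((\<lambda>r. (H r)\<^sup>2) has_real_derivative 2 * H r * ((2 * K + 1) * H r)) (at r)"
      unfolding H_def by (auto intro!: derivative_eq_intros simp: algebra_simps)
    ultimately show "\<exists>d e. ((\<lambda>r. inner (x i r) (x i r)) has_real_derivative d) (at r)
        \<and> ((\<lambda>r. (H r)\<^sup>2) has_real_derivative e) (at r) \<and> d < e" by blast
  qed
  then have "norm (x j s) \<le> H s"
    using H_pos[of s] by (auto simp: power2_norm_eq_inner[symmetric] intro: power2_le_imp_le)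
  then show "norm (x j s) \<le> B * exp ((2 * K + 1) * (s - a)) + \<epsilon>" unfolding H_def by simp
qed

lemma projection_gap_contracts:
  assumes c_bounds: "\<And>j l s. j < N \<Longrightarrow> l < N \<Longrightarrow> s \<in> {a<..<b} \<Longrightarrow> \<psi>0 \<le> c j l s \<and> c j l s \<le> K"
    and "0 < \<psi>0" "\<psi>0 \<le> K" "a \<le> b"
    and range: "\<And>l. l < N \<Longrightarrow> m \<le> inner v (x l a) \<and> inner v (x l a) \<le> M"
    and i: "i < N" and k: "k < N"
  shows "inner v (x i b) - inner v (x k b) \<le> contraction_factor \<psi>0 K (b - a) * (M - m)"
proof -
  define L where "L = \<psi>0 + K"
  have "0 < L" using \<open>0 < \<psi>0\<close> \<open>\<psi>0 \<le> K\<close> unfolding L_def by simp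
  define Y where "Y l r = inner v (x l r)" for l r
  have c_nonneg: "0 \<le> c j l s" if "j < N" "l < N" "s \<in> {a<..<b}" for j l s
    using c_bounds[OF that] \<open>0 < \<psi>0\<close> by simp
  have Y_range: "m \<le> Y l r \<and> Y l r \<le> M" if "l < N" "r \<in> {a..b}" for l r
  proof
    show "Y l r \<le> M" unfolding Y_def
      by (rule inner_le_invariant[OF c_nonneg _ that]) (use range in auto)
    have "inner (- v) (x l r) \<le> - m"
      by (rule inner_le_invariant[OF c_nonneg _ that]) (use range in auto)
    then show "m \<le> Y l r" unfolding Y_def by simp
  qed
  define u where "u r = (M - Y i r) + (Y k r - m)" for r
  define u' where "u' r = 1 / (real N - 1) * (\<Sum>l\<in>{..<N}-{k}. c k l r * (Y l r - Y k r))
      - 1 / (real N - 1) * (\<Sum>l\<in>{..<N}-{i}. c i l r * (Y l r - Y i r))" for r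
  have "\<psi>0 * (M - m) / L + (u a - \<psi>0 * (M - m) / L) * exp (- L * (b - a)) \<le> u b"
  proof (rule gronwall_lower_bound[OF \<open>a \<le> b\<close>])
    show "continuous_on {a..b} u"
      unfolding u_def Y_def using cont[OF i] cont[OF k] by (intro continuous_intros)
    fix r assume r: "r \<in> {a<..<b}"
    show "(u has_real_derivative u' r) (at r)"
      unfolding u_def u'_def Y_def
      by (auto intro!: derivative_eq_intros
          inner_has_real_derivative[OF i r] inner_has_real_derivative[OF k r])
    show "\<psi>0 * (M - m) - L * u r \<le> u' r"
      unfolding u_def u'_def L_def
      using two_le_N i k \<open>0 < \<psi>0\<close> c_bounds[OF i _ r] c_bounds[OF k _ r] Y_range r
      by (intro consensus_gap_rate_ge) auto
  qed (use \<open>0 < L\<close> in simp)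
  moreover have "0 \<le> u a" using Y_range[OF i] Y_range[OF k] \<open>a \<le> b\<close> unfolding u_def by auto
  moreover have "\<psi>0 * (M - m) / L + (u a - \<psi>0 * (M - m) / L) * exp (- L * (b - a))
      = \<psi>0 * (M - m) / L * (1 - exp (- L * (b - a))) + u a * exp (- L * (b - a))"
    by (simp add: algebra_simps)
  ultimately have "\<psi>0 * (M - m) / L * (1 - exp (- L * (b - a))) \<le> u b"
    using mult_nonneg_nonneg[OF \<open>0 \<le> u a\<close> exp_ge_zero[of "- L * (b - a)"]] by linarith
  then show ?thesis unfolding u_def Y_def L_def contraction_factor_def by (simp add: algebra_simps)
qed

lemma norm_diff_le_contracted_diam:
  assumes c_bounds: "\<And>j l s. j < N \<Longrightarrow> l < N \<Longrightarrow> s \<in> {a<..<b} \<Longrightarrow> \<psi>0 \<le> c j l s \<and> c j l s \<le> K"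
    and "0 < \<psi>0" "\<psi>0 \<le> K" "a \<le> b" and "i < N" "k < N"
  shows "norm (x i b - x k b) \<le> contraction_factor \<psi>0 K (b - a) * diam_ag N x a"
proof -
  define v where "v = sgn (x i b - x k b)"
  define m where "m = Min ((\<lambda>l. inner v (x l a)) ` {..<N})"
  have range: "m \<le> inner v (x l a) \<and> inner v (x l a) \<le> m + diam_ag N x a" if "l < N" for l
  proof
    show "m \<le> inner v (x l a)" unfolding m_def using that by (intro Min_le) auto
    have "m \<in> (\<lambda>l. inner v (x l a)) ` {..<N}" unfolding m_def using that by (intro Min_in) auto
    then obtain q where "q < N" and m_eq: "m = inner v (x q a)" by auto
    have "inner v (x l a) - m = inner v (x l a - x q a)" by (simp add: m_eq inner_diff_right)
    also have "\<dots> \<le> norm v * norm (x l a - x q a)" by (rule norm_cauchy_schwarz)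
    also have "\<dots> \<le> norm (x l a - x q a)"
      unfolding v_def norm_sgn by (simp add: mult_left_le_one_le)
    also have "\<dots> \<le> diam_ag N x a" using \<open>l < N\<close> \<open>q < N\<close> by (rule norm_le_diam_ag)
    finally show "inner v (x l a) \<le> m + diam_ag N x a" by simp
  qed
  have "norm (x i b - x k b) = inner v (x i b - x k b)"
    unfolding v_def
    by (cases "x i b = x k b")
      (simp_all add: sgn_div_norm power2_norm_eq_inner[symmetric] power2_eq_square)
  also have "\<dots> = inner v (x i b) - inner v (x k b)" by (simp add: inner_diff_right)
  also have "\<dots> \<le> contraction_factor \<psi>0 K (b - a) * (m + diam_ag N x a - m)"
    using c_bounds \<open>0 < \<psi>0\<close> \<open>\<psi>0 \<le> K\<close> \<open>a \<le> b\<close> range \<open>i < N\<close> \<open>k < N\<close>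
    by (rule projection_gap_contracts)
  finally show ?thesis by simp
qed

end

lemma psi_le_psi_sup:
  assumes "\<exists>B. \<forall>y z. \<psi> y z \<le> B"
  shows "\<psi> y z \<le> psi_sup \<psi>"
proof -
  obtain B where "\<forall>y z. \<psi> y z \<le> B" using assms by blast
  then have "bdd_above (range (\<lambda>p. \<psi> (fst p) (snd p)))" by (auto intro: bdd_aboveI[of _ B])
  then have "\<psi> (fst (y, z)) (snd (y, z)) \<le> psi_sup \<psi>"
    unfolding psi_sup_def by (rule cSUP_upper[rotated]) simp
  then show ?thesis by simp
qed

lemma psi_min_le:
  assumes "\<And>y z. 0 < \<psi> y z" and "norm y \<le> M" "norm z \<le> M"
  shows "psi_min \<psi> M \<le> \<psi> y z"
proof -
  have "bdd_below ((\<lambda>p. \<psi> (fst p) (snd p)) ` (cball 0 M \<times> cball 0 M))"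
    by (rule bdd_belowI[of _ 0]) (auto intro: less_imp_le assms(1))
  then have "psi_min \<psi> M \<le> \<psi> (fst (y, z)) (snd (y, z))"
    unfolding psi_min_def by (rule cINF_lower) (use assms(2,3) in simp)
  then show ?thesis by simp
qed

lemma psi_min_pos:
  fixes \<psi> :: "'a::{real_normed_vector, heine_borel} \<Rightarrow> 'a \<Rightarrow> real"
  assumes "\<And>y z. 0 < \<psi> y z" and "continuous_on UNIV (\<lambda>p. \<psi> (fst p) (snd p))" and "0 \<le> M"
  shows "0 < psi_min \<psi> M"
proof -
  have "compact (cball (0::'a) M \<times> cball (0::'a) M)" "cball (0::'a) M \<times> cball (0::'a) M \<noteq> {}"
    "continuous_on (cball 0 M \<times> cball 0 M) (\<lambda>p. \<psi> (fst p) (snd p))"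
    using assms(2,3) compact_Times[OF compact_cball compact_cball]
    by (auto intro: continuous_on_subset)
  from continuous_attains_inf[OF this] obtain p where
    p_min: "\<And>q. q \<in> cball 0 M \<times> cball 0 M \<Longrightarrow> \<psi> (fst p) (snd p) \<le> \<psi> (fst q) (snd q)"
    by blast
  then have "\<psi> (fst p) (snd p) \<le> psi_min \<psi> M"
    unfolding psi_min_def using \<open>0 \<le> M\<close> by (intro cINF_greatest) auto
  with assms(1) show ?thesis by (rule less_le_trans)
qed

lemma abs_alpha_sw_le_1: "\<bar>alpha_sw t s\<bar> \<le> 1"
  unfolding alpha_sw_def by simp

lemma alpha_sw_positive_phase:
  assumes "strict_mono t" and s: "t (2 * n) < s" "s < t (2 * n + 1)"
  shows "alpha_sw t s = 1"
proof -
  have "\<not> (t (2 * m + 1) \<le> s \<and> s \<le> t (2 * m + 2))" for m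
  proof
    assume m: "t (2 * m + 1) \<le> s \<and> s \<le> t (2 * m + 2)"
    then have "t (2 * m + 1) < t (2 * n + 1)" using s by linarith
    then have "2 * m + 2 \<le> 2 * n" using strict_mono_less[OF \<open>strict_mono t\<close>] by simp
    then have "t (2 * m + 2) \<le> t (2 * n)" using strict_mono_less_eq[OF \<open>strict_mono t\<close>] by blast
    then show False using m s by simp
  qed
  then show ?thesis unfolding alpha_sw_def by auto
qed

lemma consensus_flow_of_solution:
  fixes x :: "nat \<Rightarrow> real \<Rightarrow> 'a::real_inner"
  assumes "is_solution N \<psi> t x" "2 \<le> N" "0 \<le> t k"
  shows "consensus_flow N (t k) (t (Suc k)) x (\<lambda>j l s. alpha_sw t s * \<psi> (x j s) (x l s))"
  using assms unfolding is_solution_def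
  by unfold_locales (auto elim!: continuous_on_subset)

lemma consensus_flow_of_solution_positive_phase:
  fixes x :: "nat \<Rightarrow> real \<Rightarrow> 'a::real_inner"
  assumes "is_solution N \<psi> t x" "2 \<le> N" "0 \<le> t (2 * n)" "strict_mono t"
  shows "consensus_flow N (t (2 * n)) (t (2 * n + 1)) x (\<lambda>j l s. \<psi> (x j s) (x l s))"
proof -
  interpret consensus_flow N "t (2 * n)" "t (Suc (2 * n))" x
      "\<lambda>j l s. alpha_sw t s * \<psi> (x j s) (x l s)"
    using assms(1-3) by (rule consensus_flow_of_solution)
  have "alpha_sw t s = 1" if "t (2 * n) < s" "s < t (Suc (2 * n))" for s
    using alpha_sw_positive_phase[OF \<open>strict_mono t\<close>, of n s] that by simp
  then show ?thesis using two_le_N cont deriv by unfold_locales auto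
qed

lemma norm_solution_le_exp:
  fixes x :: "nat \<Rightarrow> real \<Rightarrow> 'a::real_inner"
  assumes sol: "is_solution N \<psi> t x" and N: "2 \<le> N" and t: "strict_mono t" "t 0 = 0"
    and \<psi>_bound: "\<And>y z. \<bar>\<psi> y z\<bar> \<le> K" and init: "\<And>i. i < N \<Longrightarrow> norm (x i 0) \<le> R"
    and "i < N" "t k \<le> s" "s \<le> t (Suc k)"
  shows "norm (x i s) \<le> \<bar>R\<bar> * exp ((2 * K + 1) * s)"
proof -
  have t_nonneg: "0 \<le> t k" for k using strict_mono_less_eq[OF t(1), of 0 k] t(2) by simp
  have phase: "norm (x i s) \<le> \<bar>R\<bar> * exp ((2 * K + 1) * s)"
    if start: "\<forall>i<N. norm (x i (t k)) \<le> \<bar>R\<bar> * exp ((2 * K + 1) * t k)"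
      and "i < N" "s \<in> {t k..t (Suc k)}" for k i s
  proof -
    interpret consensus_flow N "t k" "t (Suc k)" x "\<lambda>j l s. alpha_sw t s * \<psi> (x j s) (x l s)"
      using sol N t_nonneg by (rule consensus_flow_of_solution)
    have "\<bar>alpha_sw t r\<bar> * \<bar>\<psi> y z\<bar> \<le> 1 * K" for r y z
      by (rule mult_mono) (use abs_alpha_sw_le_1 \<psi>_bound in auto)
    then have c_bound: "\<bar>alpha_sw t r * \<psi> y z\<bar> \<le> K" for r y z by (simp add: abs_mult)
    have "norm (x i s) \<le> \<bar>R\<bar> * exp ((2 * K + 1) * t k) * exp ((2 * K + 1) * (s - t k))"
      by (rule norm_le_exp_growth[OF c_bound _ _ \<open>i < N\<close>]) (use start that in auto)
    also have "\<dots> = \<bar>R\<bar> * exp ((2 * K + 1) * s)" by (simp add: algebra_simps flip: exp_add)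
    finally show ?thesis .
  qed
  have "\<forall>i<N. norm (x i (t k)) \<le> \<bar>R\<bar> * exp ((2 * K + 1) * t k)" for k
  proof (induction k)
    case 0
    then show ?case using init t(2) by force
  next
    case (Suc k)
    have "t k \<le> t (Suc k)" using strict_monoD[OF t(1), of k "Suc k"] by simp
    then show ?case using phase[OF Suc.IH] by auto
  qed
  then show ?thesis using \<open>t k \<le> s\<close> \<open>s \<le> t (Suc k)\<close> by (intro phase[OF _ \<open>i < N\<close>]) auto
qed

lemma diam_ag_positive_phase_le:
  fixes \<psi> :: "'a::euclidean_space \<Rightarrow> 'a \<Rightarrow> real" and x :: "nat \<Rightarrow> real \<Rightarrow> 'a"
  assumes psi_pos: "\<And>y z. 0 < \<psi> y z" and \<psi>_le_K: "\<And>y z. \<psi> y z \<le> K"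
    and psi_cont: "continuous_on UNIV (\<lambda>p. \<psi> (fst p) (snd p))"
    and t0: "t 0 = 0" and t_mono: "strict_mono t"
    and sol: "is_solution N \<psi> t x" and N: "2 \<le> N" and init: "\<forall>i<N. norm (x i 0) \<le> R"
  shows "diam_ag N x (t (2 * n + 1))
    \<le> contraction_factor (psi_min \<psi> (\<bar>R\<bar> * exp ((2 * K + 1) * t (2 * n + 1)))) K
        (t (2 * n + 1) - t (2 * n)) * diam_ag N x (t (2 * n))"
proof -
  define a b where "a = t (2 * n)" and "b = t (2 * n + 1)"
  define M where "M = \<bar>R\<bar> * exp ((2 * K + 1) * b)"
  have "0 \<le> t (2 * n)" using strict_mono_less_eq[OF t_mono, of 0 "2 * n"] t0 by simp
  have "a < b" using strict_monoD[OF t_mono] unfolding a_def b_def by simp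
  interpret consensus_flow N a b x "\<lambda>j l s. \<psi> (x j s) (x l s)"
    unfolding a_def b_def using sol N \<open>0 \<le> t (2 * n)\<close> t_mono
    by (rule consensus_flow_of_solution_positive_phase)
  have "norm (x l s) \<le> M" if "l < N" "s \<in> {a..b}" for l s
  proof -
    have "norm (x l s) \<le> \<bar>R\<bar> * exp ((2 * K + 1) * s)"
      using that init psi_pos \<psi>_le_K unfolding a_def b_def
      by (intro norm_solution_le_exp[OF sol N t_mono t0, of K R l "2 * n"])
        (auto simp: abs_le_iff less_imp_le)
    also have "\<dots> \<le> M"
      unfolding M_def using that psi_pos[of 0 0] \<psi>_le_K[of 0 0] by (simp add: mult_left_mono)
    finally show ?thesis .
  qed
  then have "psi_min \<psi> M \<le> \<psi> (x j s) (x l s) \<and> \<psi> (x j s) (x l s) \<le> K"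
    if "j < N" "l < N" "s \<in> {a<..<b}" for j l s
    using that psi_pos \<psi>_le_K by (auto intro: psi_min_le)
  moreover have "0 < psi_min \<psi> M" using psi_pos psi_cont by (rule psi_min_pos) (simp add: M_def)
  moreover have "psi_min \<psi> M \<le> K"
    by (rule order_trans[OF psi_min_le[OF psi_pos, where y = 0 and z = 0] \<psi>_le_K])
      (simp_all add: M_def)
  ultimately have "norm (x i b - x k b) \<le> contraction_factor (psi_min \<psi> M) K (b - a) * diam_ag N x a"
    if "i < N" "k < N" for i k
    using \<open>a < b\<close> that by (intro norm_diff_le_contracted_diam) auto
  then show ?thesis unfolding a_def b_def M_def using N by (intro diam_ag_le) auto
qed

lemma positive_phase_contraction:
  fixes \<psi> :: "'a::euclidean_space \<Rightarrow> 'a \<Rightarrow> real"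
  assumes psi_pos: "\<And>y z. 0 < \<psi> y z" and psi_bdd: "\<exists>B. \<forall>y z. \<psi> y z \<le> B"
    and psi_cont: "continuous_on UNIV (\<lambda>p. \<psi> (fst p) (snd p))"
    and t0: "t 0 = 0" and t_mono: "strict_mono t"
  shows "\<exists>C. 0 < C \<and> C < 1 \<and>
    (\<forall>N x. 2 \<le> N \<longrightarrow> is_solution N \<psi> t x \<longrightarrow> (\<forall>i<N. norm (x i 0) \<le> R) \<longrightarrow>
      diam_ag N x (t (2 * n + 1)) \<le> C * diam_ag N x (t (2 * n)))"
proof -
  define K where "K = psi_sup \<psi>"
  have \<psi>_le_K: "\<psi> y z \<le> K" for y z unfolding K_def using psi_bdd by (rule psi_le_psi_sup)
  define \<psi>0 where "\<psi>0 = psi_min \<psi> (\<bar>R\<bar> * exp ((2 * K + 1) * t (2 * n + 1)))"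
  have "0 < \<psi>0" unfolding \<psi>0_def using psi_pos psi_cont by (rule psi_min_pos) simp
  moreover have "0 \<le> K" using \<psi>_le_K[of 0 0] psi_pos[of 0 0] by linarith
  moreover have "0 < t (2 * n + 1) - t (2 * n)" using strict_monoD[OF t_mono] by simp
  ultimately have "0 < contraction_factor \<psi>0 K (t (2 * n + 1) - t (2 * n))"
    "contraction_factor \<psi>0 K (t (2 * n + 1) - t (2 * n)) < 1"
    by (simp_all add: contraction_factor_bounds)
  moreover have "diam_ag N x (t (2 * n + 1))
      \<le> contraction_factor \<psi>0 K (t (2 * n + 1) - t (2 * n)) * diam_ag N x (t (2 * n))"
    if "is_solution N \<psi> t x" "2 \<le> N" "\<forall>i<N. norm (x i 0) \<le> R" for N x
    unfolding \<psi>0_def using psi_pos \<psi>_le_K psi_cont t0 t_mono that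
    by (rule diam_ag_positive_phase_le)
  ultimately show ?thesis by blast
qed

theorem proposition3p11:
  fixes \<psi> :: "'a::euclidean_space \<Rightarrow> 'a \<Rightarrow> real" and t :: "nat \<Rightarrow> real"
  assumes psi_pos: "\<And>y z. \<psi> y z > 0"
    and psi_bdd: "\<exists>B. \<forall>y z. \<psi> y z \<le> B"
    and psi_cont: "continuous_on UNIV (\<lambda>p. \<psi> (fst p) (snd p))"
    and t0: "t 0 = 0" and t_mono: "strict_mono t"
    and t_inf: "filterlim t at_top sequentially"
    and neg_short: "\<And>n. t (2*n+2) - t (2*n+1) < ln 2 / psi_sup \<psi>"
    and sum_fin: "summable (\<lambda>p. ln (exp (psi_sup \<psi> * (t (2*p+2) - t (2*p+1)))
                                  / (2 - exp (psi_sup \<psi> * (t (2*p+2) - t (2*p+1))))))"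
  shows "\<forall>n. \<forall>R. \<exists>C. 0 < C \<and> C < 1 \<and>
           (\<forall>N x. 2 \<le> N \<longrightarrow> is_solution N \<psi> t x \<longrightarrow> (\<forall>i<N. norm (x i 0) \<le> R) \<longrightarrow>
              filterlim (\<lambda>m. \<Sum>p<m. ln (max (1 - exp (- psi_sup \<psi> * (t (2*p+1) - t (2*p))))
                  (1 - psi_min \<psi> (M0 N (psi_sup \<psi>) t x) / psi_sup \<psi>
                         * (1 - exp (- psi_sup \<psi> * (t (2*p+1) - t (2*p)))))))
                at_bot sequentially \<longrightarrow>
              diam_ag N x (t (2*n+1)) \<le> C * diam_ag N x (t (2*n)))"
  using positive_phase_contraction[OF psi_pos psi_bdd psi_cont t0 t_mono] by blast

end
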